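(* Let $a_0<a_1<\dots<a_n$ be positive integers with $\gcd(a_0,\dots,a_n)=1$ and let $t\in\mathbb{Z}_{\ge0}$. If the equation $a_0x_0+a_1x_1+\dots+a_nx_n=t$ has a solution $x\in\mathbb{Z}_{\ge 0}^{n+1}$, then it has a solution $x\in\mathbb{Z}_{\ge0}^{n+1}$ with $$\prod_{i=1}^n (x_i+1)\le a_0 .$$ *)

theory Defs
  imports Main
begin

end

theory Submission
  imports Defs "HOL-Library.FuncSet"
begin

(* Among all solutions choose one whose tail z = (x_1, ..., x_n) is least, first for the weight
   a_1 x_1 + ... + a_n x_n and then for the base-(t+1) number with digits x_i, which separates
   tails because x_i <= t.  If a_0 < prod (x_i + 1), the box {y. y_i <= x_i} has more than a_0
   points, so two distinct ones p, q have weights congruent modulo a_0.  Ordered so that q is the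
   smaller, z - p + q is again a tail (the weight difference, a multiple of a_0, moves into x_0)
   and it is smaller than z. *)

lemma exists_distinct_pair_mod_eq:
  fixes f :: "'a \<Rightarrow> nat"
  assumes "0 < m" and "m < card A"
  shows "\<exists>y\<in>A. \<exists>y'\<in>A. y \<noteq> y' \<and> f y mod m = f y' mod m"
proof -
  have "(\<lambda>y. f y mod m) ` A \<subseteq> {..<m}"
    using assms(1) by auto
  then have "card ((\<lambda>y. f y mod m) ` A) \<le> m"
    using card_mono[OF finite_lessThan] by fastforce
  then have "card ((\<lambda>y. f y mod m) ` A) < card A"
    using assms(2) by linarith
  then have "\<not> inj_on (\<lambda>y. f y mod m) A"
    by (rule pigeonhole)
  then show ?thesis
    unfolding inj_on_def by blast
qed

lemma base_expansion_lessThan_unique: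
  fixes u v :: "nat \<Rightarrow> nat"
  assumes "\<forall>i<N. u i < B" and "\<forall>i<N. v i < B"
    and "(\<Sum>i<N. B ^ i * u i) = (\<Sum>i<N. B ^ i * v i)"
  shows "\<forall>i<N. u i = v i"
  using assms
proof (induction N arbitrary: u v)
  case 0
  then show ?case by simp
next
  case (Suc N)
  have shift: "(\<Sum>i<Suc N. B ^ i * w i) = w 0 + B * (\<Sum>i<N. B ^ i * w (Suc i))" for w
    unfolding sum.lessThan_Suc_shift sum_distrib_left by (simp add: ac_simps)
  have "u 0 < B" "v 0 < B"
    using Suc.prems(1,2) by auto
  then have "(\<Sum>i<Suc N. B ^ i * u i) mod B = u 0" "(\<Sum>i<Suc N. B ^ i * v i) mod B = v 0"
    unfolding shift by simp_all
  then have digit0: "u 0 = v 0"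
    using Suc.prems(3) by simp
  have "\<forall>i<N. u (Suc i) < B" "\<forall>i<N. v (Suc i) < B"
    using Suc.prems(1,2) by auto
  moreover have "(\<Sum>i<N. B ^ i * u (Suc i)) = (\<Sum>i<N. B ^ i * v (Suc i))"
    using Suc.prems(3) digit0 \<open>u 0 < B\<close> unfolding shift by simp
  ultimately have "\<forall>i<N. u (Suc i) = v (Suc i)"
    by (rule Suc.IH)
  with digit0 show ?case
    unfolding All_less_Suc2 by blast
qed

lemma base_expansion_unique:
  fixes u v :: "nat \<Rightarrow> nat" and I :: "nat set"
  assumes "finite I" and "\<forall>i\<in>I. u i < B" and "\<forall>i\<in>I. v i < B"
    and "(\<Sum>i\<in>I. B ^ i * u i) = (\<Sum>i\<in>I. B ^ i * v i)"
  shows "\<forall>i\<in>I. u i = v i"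
proof (cases "I = {}")
  case False
  then have "0 < B"
    using assms(2) by fastforce
  obtain N where N: "\<forall>i\<in>I. i < N"
    using assms(1) finite_nat_set_iff_bounded by blast
  have extend: "(\<Sum>i\<in>I. B ^ i * w i) = (\<Sum>i<N. B ^ i * (if i \<in> I then w i else 0))" for w
    using N by (intro sum.mono_neutral_cong_left) auto
  have "\<forall>i<N. (if i \<in> I then u i else 0) = (if i \<in> I then v i else 0)"
    using assms(2-4) N \<open>0 < B\<close>
    by (intro base_expansion_lessThan_unique[where B = B]) (auto simp: extend[symmetric])
  then show ?thesis
    using N by fastforce
qed simp

lemma sum_exchange:
  fixes w x y y' :: "'a \<Rightarrow> nat"
  assumes "\<forall>i\<in>I. y i \<le> x i"
  shows "(\<Sum>i\<in>I. w i * (x i - y i + y' i)) + (\<Sum>i\<in>I. w i * y i)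
       = (\<Sum>i\<in>I. w i * x i) + (\<Sum>i\<in>I. w i * y' i)"
proof -
  have "w i * (x i - y i + y' i) + w i * y i = w i * x i + w i * y' i" if "i \<in> I" for i
  proof -
    have "y i \<le> x i"
      using assms that by blast
    then have "x i - y i + y' i + y i = x i + y' i"
      by arith
    then show ?thesis
      by (metis distrib_left)
  qed
  then show ?thesis
    unfolding sum.distrib[symmetric] by (rule sum.cong[OF refl])
qed

lemma exists_smaller_exchange:
  fixes w z :: "nat \<Rightarrow> nat" and I :: "nat set"
  assumes "finite I" and "0 < m" and "\<forall>i\<in>I. z i < B" and "m < (\<Prod>i\<in>I. z i + 1)"
  shows "\<exists>z' k. (\<Sum>i\<in>I. w i * z' i) + m * k = (\<Sum>i\<in>I. w i * z i)
    \<and> (z', z) \<in> measures [\<lambda>u. \<Sum>i\<in>I. w i * u i, \<lambda>u. \<Sum>i\<in>I. B ^ i * u i]"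
proof -
  define R where "R u = (\<Sum>i\<in>I. w i * u i)" for u
  define C where "C u = (\<Sum>i\<in>I. B ^ i * u i)" for u
  define box where "box = PiE I (\<lambda>i. {..z i})"
  have "card box = (\<Prod>i\<in>I. z i + 1)"
    using assms(1) by (simp add: box_def card_PiE)
  then obtain y y' where y: "y \<in> box" "y' \<in> box" "y \<noteq> y'" "R y mod m = R y' mod m"
    using exists_distinct_pair_mod_eq[OF \<open>0 < m\<close>, of box R] assms(4) by auto
  have box_le: "u i \<le> z i" if "u \<in> box" "i \<in> I" for u i
    using that by (auto simp: box_def PiE_iff)
  have "C y \<noteq> C y'"
  proof
    assume "C y = C y'"
    moreover have "\<forall>i\<in>I. y i < B" "\<forall>i\<in>I. y' i < B"
      using y(1,2) box_le assms(3) by (meson le_less_trans)+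
    ultimately have "\<forall>i\<in>I. y i = y' i"
      using base_expansion_unique[OF assms(1)] unfolding C_def by blast
    then show False
      using PiE_ext y(1-3) unfolding box_def by blast
  qed
  then have "(y', y) \<in> measures [R, C] \<or> (y, y') \<in> measures [R, C]"
    by (auto simp: linorder_neq_iff)
  then obtain p q where pq: "p \<in> box" "(q, p) \<in> measures [R, C]" "R p mod m = R q mod m"
    using y(1,2,4) y(4)[symmetric] by blast
  define z' where "z' i = z i - p i + q i" for i
  from sum_exchange[of I p z] box_le[OF pq(1)]
  have exch: "R z' + R p = R z + R q" "C z' + C p = C z + C q"
    by (simp_all add: z'_def R_def C_def)
  have "R q \<le> R p"
    using pq(2) by auto
  then have "m dvd R p - R q"
    using pq(3) mod_eq_dvd_iff_nat by blast
  then obtain k where "R p - R q = m * k"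
    by (rule dvdE)
  then have "R z' + m * k = R z"
    using exch(1) \<open>R q \<le> R p\<close> by linarith
  moreover have "(z', z) \<in> measures [R, C]"
    using pq(2) exch by auto
  ultimately show ?thesis
    unfolding R_def C_def by blast
qed

lemma exists_solution_in_small_box:
  fixes w x :: "nat \<Rightarrow> nat" and I :: "nat set"
  assumes "finite I" and "0 < m" and w_pos: "\<forall>i\<in>I. 0 < w i"
    and "m * x0 + (\<Sum>i\<in>I. w i * x i) = t"
  shows "\<exists>x0' x'. m * x0' + (\<Sum>i\<in>I. w i * x' i) = t \<and> (\<Prod>i\<in>I. x' i + 1) \<le> m"
proof -
  define R where "R u = (\<Sum>i\<in>I. w i * u i)" for u
  define C where "C u = (\<Sum>i\<in>I. Suc t ^ i * u i)" for u
  define Sol where "Sol = {u. \<exists>u0. m * u0 + R u = t}"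
  have "x \<in> Sol"
    using assms(4) by (auto simp: Sol_def R_def)
  then obtain z where "z \<in> Sol" and z_min: "\<And>u. (u, z) \<in> measures [R, C] \<Longrightarrow> u \<notin> Sol"
    using wfE_min[OF wf_measures[of "[R, C]"]] by blast
  then obtain z0 where z0: "m * z0 + R z = t"
    by (auto simp: Sol_def)
  have z_lt: "\<forall>i\<in>I. z i < Suc t"
  proof
    fix i
    assume "i \<in> I"
    have "z i \<le> w i * z i"
      using w_pos \<open>i \<in> I\<close> by (simp add: Suc_le_eq)
    also have "\<dots> \<le> R z"
      unfolding R_def using assms(1) \<open>i \<in> I\<close> by (intro member_le_sum) auto
    finally show "z i < Suc t"
      using z0 by linarith
  qed
  have "(\<Prod>i\<in>I. z i + 1) \<le> m"
  proof (rule ccontr)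
    assume "\<not> ?thesis"
    then have "m < (\<Prod>i\<in>I. z i + 1)"
      by simp
    from exists_smaller_exchange[OF assms(1,2) z_lt this, of w]
    obtain z' k where "R z' + m * k = R z" and "(z', z) \<in> measures [R, C]"
      unfolding R_def C_def by blast
    moreover have "m * (z0 + k) + R z' = t"
      using z0 calculation(1) by (simp add: algebra_simps)
    ultimately show False
      using z_min unfolding Sol_def by blast
  qed
  then show ?thesis
    using z0 unfolding R_def by blast
qed

theorem lemma1:
  fixes a :: "nat \<Rightarrow> nat" and n :: nat and t :: nat
  assumes pos: "0 < a 0"
    and incr: "\<And>i. i < n \<Longrightarrow> a i < a (Suc i)"
    and gcd1: "Gcd (a ` {0..n}) = 1"
    and sol: "\<exists>x :: nat \<Rightarrow> nat. (\<Sum>i=0..n. a i * x i) = t"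
  shows "\<exists>x :: nat \<Rightarrow> nat. (\<Sum>i=0..n. a i * x i) = t \<and> (\<Prod>i=1..n. x i + 1) \<le> a 0"
proof -
  have split: "(\<Sum>i=0..n. a i * x i) = a 0 * x 0 + (\<Sum>i=1..n. a i * x i)" for x
    by (simp add: sum.atLeast_Suc_atMost)
  have "0 < a i" if i: "i \<in> {1..n}" for i
  proof -
    obtain j where "i = Suc j" "j < n"
      using i by (cases i) auto
    then show ?thesis
      using incr[of j] by simp
  qed
  moreover obtain x where "(\<Sum>i=0..n. a i * x i) = t"
    using sol by blast
  then have "a 0 * x 0 + (\<Sum>i=1..n. a i * x i) = t"
    unfolding split .
  ultimately obtain x0 x' where x': "a 0 * x0 + (\<Sum>i=1..n. a i * x' i) = t"
    "(\<Prod>i=1..n. x' i + 1) \<le> a 0"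
    using exists_solution_in_small_box[OF finite_atLeastAtMost pos] by blast
  define y where "y = x'(0 := x0)"
  have "y 0 = x0" "(\<Sum>i=1..n. a i * y i) = (\<Sum>i=1..n. a i * x' i)"
    "(\<Prod>i=1..n. y i + 1) = (\<Prod>i=1..n. x' i + 1)"
    unfolding y_def by (auto intro: sum.cong prod.cong)
  then have "(\<Sum>i=0..n. a i * y i) = t \<and> (\<Prod>i=1..n. y i + 1) \<le> a 0"
    using x' unfolding split by simp
  then show ?thesis
    by blast
qed

end
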